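(* For $n\ge4$ and $0\le k<n$, $$|\mathbf{I}_{n,k}(012)|=|\mathbf{I}_{n-1}(012)|-\sum_{l=1}^{k-1}\sum_{j=0}^{l-1}\sum_{i\ge j}|\mathbf{I}_{n-3,i}(012)|,$$ with initial conditions $|\mathbf{I}_{1,0}(012)|=|\mathbf{I}_{2,0}(012)|=|\mathbf{I}_{2,1}(012)|=|\mathbf{I}_{3,2}(012)|=1$ and $|\mathbf{I}_{3,0}(012)|=|\mathbf{I}_{3,1}(012)|=2$. Equivalently, for $n\ge4$, $$|\mathbf{I}_{n,k}(012)|=|\mathbf{I}_{n-1}(012)|-\sum_{i=0}^{k-3}(i+1)\Big(k-1-\frac i2\Big)|\mathbf{I}_{n-3,i}(012)|-\frac{k(k-1)}{2}\sum_{i=k-2}^{n-4}|\mathbf{I}_{n-3,i}(012)|.$$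
   Context: An inversion sequence of length $n$ is an integer sequence $e=e_1\dots e_n$ with $0\le e_i<i$ for all $i$; $\mathbf{I}_n$ denotes the set of these. $\mathbf{I}_n(012)$ is the set of $e\in\mathbf{I}_n$ with no $i$ such that $e_i<e_{i+1}<e_{i+2}$ (avoiding the consecutive pattern $012$). $\mathbf{I}_{n,k}(012)=\{e\in\mathbf{I}_n(012):e_n=k\}$, empty for $k\ge n$. Empty sums are $0$. *)

theory Defs
  imports Complex_Main
begin

text \<open>Inversion sequences of length n, as lists indexed from 0:
  entry e!j (the paper's e_(j+1)) satisfies 0 <= e!j < j+1.\<close>
definition invseq :: "nat \<Rightarrow> nat list set" where
  "invseq n = {e. length e = n \<and> (\<forall>j<n. e ! j < j + 1)}"

definition avoids012 :: "nat list \<Rightarrow> bool" where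
  "avoids012 e \<longleftrightarrow>
     \<not> (\<exists>i. i + 2 < length e \<and> e ! i < e ! (i+1) \<and> e ! (i+1) < e ! (i+2))"

definition I012 :: "nat \<Rightarrow> nat list set" where
  "I012 n = {e \<in> invseq n. avoids012 e}"

definition I012k :: "nat \<Rightarrow> nat \<Rightarrow> nat list set" where
  "I012k n k = {e \<in> I012 n. 0 < n \<and> e ! (n - 1) = k}"

end

(*
  A sequence in I_{n,k}(012) is e followed by k, with e in I_{n-1}(012), where e must not end in an
  ascent e_{n-2} < e_{n-1} < k.  The excluded e are counted by peeling off two more entries:
  e_{n-1} = l with 1 <= l < k, and e_{n-2} = j < l; avoidance then forces e_{n-2} <= e_{n-3},
  and conversely every sequence of I_{n-3}(012) whose last entry is at least j extends by j
  without creating a 012.  This gives the triple sum.  The closed form follows by exchanging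
  the order of summation: |I_{n-3,i}(012)| is counted once for every pair (l, j) with
  j <= min(i, l - 1).
*)

theory Submission
  imports Defs
begin

definition completes012 :: "nat list \<Rightarrow> nat \<Rightarrow> bool" where
  "completes012 e x \<longleftrightarrow>
     2 \<le> length e \<and> e ! (length e - 2) < e ! (length e - 1) \<and> e ! (length e - 1) < x"

lemma completes012_iff:
  "length e = Suc (Suc r) \<Longrightarrow> completes012 e x \<longleftrightarrow> e ! r < e ! Suc r \<and> e ! Suc r < x"
  by (simp add: completes012_def)

lemma avoids012_snoc:
  "avoids012 (e @ [x]) \<longleftrightarrow> avoids012 e \<and> \<not> completes012 e x"
proof -
  define asc where "asc f i \<longleftrightarrow> f ! i < f ! (i + 1) \<and> f ! (i + 1) < f ! (i + 2)"
    for f :: "nat list" and i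
  have "(\<exists>i. i + 2 < length (e @ [x]) \<and> asc (e @ [x]) i)
    \<longleftrightarrow> (\<exists>i. i + 2 < length e \<and> asc e i) \<or> completes012 e x"
  proof (cases "length e < 2")
    case False
    then obtain m where m: "length e = m + 2"
      by (metis add.commute le_Suc_ex not_less)
    have "i + 2 < length e \<Longrightarrow> asc (e @ [x]) i = asc e i" for i
      by (simp add: asc_def nth_append)
    moreover have "asc (e @ [x]) m \<longleftrightarrow> completes012 e x"
      using m by (simp add: asc_def completes012_def nth_append)
    moreover have "i + 2 < length (e @ [x]) \<longleftrightarrow> i + 2 < length e \<or> i = m" for i
      using m by auto
    ultimately show ?thesis
      by (metis m less_irrefl)
  qed (auto simp: completes012_def asc_def)
  then show ?thesis
    unfolding avoids012_def asc_def by blast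
qed

lemma snoc_in_I012_iff:
  "e @ [x] \<in> I012 (Suc n) \<longleftrightarrow> e \<in> I012 n \<and> x \<le> n \<and> \<not> completes012 e x"
proof -
  have "e @ [x] \<in> invseq (Suc n) \<longleftrightarrow> e \<in> invseq n \<and> x \<le> n"
  proof (cases "length e = n")
    case True
    then show ?thesis
      unfolding invseq_def by (auto simp: All_less_Suc nth_append)
  qed (simp add: invseq_def)
  then show ?thesis
    by (auto simp: I012_def avoids012_snoc)
qed

lemma length_I012: "e \<in> I012 n \<Longrightarrow> length e = n"
  by (simp add: I012_def invseq_def)

lemma I012_nth_le: "e \<in> I012 n \<Longrightarrow> i < n \<Longrightarrow> e ! i \<le> i"
  by (simp add: I012_def invseq_def less_Suc_eq_le)

lemma I012_Suc_snoc:
  assumes "e \<in> I012 (Suc n)"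
  shows "e = take n e @ [e ! n]"
proof -
  have "length e = Suc n" using length_I012[OF assms] .
  then show ?thesis
    using take_Suc_conv_app_nth[of n e] by simp
qed

lemma I012_0: "I012 0 = {[]}"
  by (auto simp: I012_def invseq_def avoids012_def)

lemma I012_Suc:
  "I012 (Suc n) = (\<Union>x\<le>n. (\<lambda>e. e @ [x]) ` {e \<in> I012 n. \<not> completes012 e x})"
proof (intro equalityI subsetI)
  fix e assume e: "e \<in> I012 (Suc n)"
  then have "e = take n e @ [e ! n]"
    by (rule I012_Suc_snoc)
  moreover have "take n e \<in> I012 n" "e ! n \<le> n" "\<not> completes012 (take n e) (e ! n)"
    using e calculation snoc_in_I012_iff by metis+
  ultimately show "e \<in> (\<Union>x\<le>n. (\<lambda>e. e @ [x]) ` {e \<in> I012 n. \<not> completes012 e x})"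
    by blast
qed (auto simp: snoc_in_I012_iff)

lemma finite_I012: "finite (I012 n)"
  by (induction n) (simp_all add: I012_0 I012_Suc)

lemma card_eq_sum_card_fibers:
  assumes "finite A" "finite B" "f ` A \<subseteq> B"
  shows "card A = (\<Sum>b\<in>B. card {a \<in> A. f a = b})"
  using sum.group[OF assms, of "\<lambda>_. 1::nat"] by simp

lemma card_I012_Suc_last:
  assumes "x \<le> n"
  shows "card {e \<in> I012 (Suc n). e ! n = x \<and> P e}
       = card {e \<in> I012 n. \<not> completes012 e x \<and> P (e @ [x])}"
proof -
  have "{e \<in> I012 (Suc n). e ! n = x \<and> P e}
      = (\<lambda>e. e @ [x]) ` {e \<in> I012 n. \<not> completes012 e x \<and> P (e @ [x])}"
  proof (intro equalityI subsetI)
    fix e assume e: "e \<in> {e \<in> I012 (Suc n). e ! n = x \<and> P e}"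
    then have snoc: "e = take n e @ [x]"
      using I012_Suc_snoc by blast
    then have "take n e \<in> I012 n" "\<not> completes012 (take n e) x"
      using e snoc_in_I012_iff by (metis (no_types, lifting) mem_Collect_eq)+
    then show "e \<in> (\<lambda>e. e @ [x]) ` {e \<in> I012 n. \<not> completes012 e x \<and> P (e @ [x])}"
      using e snoc by (intro image_eqI[of _ _ "take n e"]) auto
  next
    fix e assume "e \<in> (\<lambda>e. e @ [x]) ` {e \<in> I012 n. \<not> completes012 e x \<and> P (e @ [x])}"
    then show "e \<in> {e \<in> I012 (Suc n). e ! n = x \<and> P e}"
      using assms length_I012 by (auto simp: snoc_in_I012_iff nth_append)
  qed
  then show ?thesis
    by (simp add: card_image inj_on_def)
qed

lemma card_I012k_Suc:
  assumes "k \<le> m"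
  shows "card (I012k (Suc m) k) + card {e \<in> I012 m. completes012 e k} = card (I012 m)"
proof -
  have "card (I012k (Suc m) k) = card {e \<in> I012 (Suc m). e ! m = k \<and> True}"
    by (simp add: I012k_def)
  also have "\<dots> = card {e \<in> I012 m. \<not> completes012 e k}"
    using card_I012_Suc_last[OF assms, where P = "\<lambda>_. True"] by simp
  moreover have "I012 m = {e \<in> I012 m. \<not> completes012 e k} \<union> {e \<in> I012 m. completes012 e k}"
    by blast
  ultimately show ?thesis
    using card_Un_disjoint finite_I012 by (metis (no_types, lifting) disjoint_iff finite_Un mem_Collect_eq)
qed

lemma card_I012_last_ge:
  assumes "1 \<le> r"
  shows "card {e \<in> I012 r. j \<le> e ! (r - 1)} = (\<Sum>i\<in>{j..<r}. card (I012k r i))"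
proof -
  let ?W = "{e \<in> I012 r. j \<le> e ! (r - 1)}"
  have "(\<lambda>e. e ! (r - 1)) ` ?W \<subseteq> {j..<r}"
    using assms I012_nth_le[of _ r "r - 1"] by fastforce
  then have "card ?W = (\<Sum>i\<in>{j..<r}. card {e \<in> ?W. e ! (r - 1) = i})"
    using finite_I012 by (intro card_eq_sum_card_fibers) auto
  also have "\<dots> = (\<Sum>i\<in>{j..<r}. card (I012k r i))"
    using assms by (intro sum.cong refl arg_cong[where f = card]) (auto simp: I012k_def)
  finally show ?thesis .
qed

lemma card_I012_last_below_descent:
  assumes "1 \<le> r" "1 \<le> l" "l \<le> Suc r"
  shows "card {e \<in> I012 (Suc r). e ! r < l \<and> e ! r \<le> e ! (r - 1)}
       = (\<Sum>j\<in>{0..l-1}. \<Sum>i\<in>{j..<r}. card (I012k r i))"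
proof -
  let ?S = "{e \<in> I012 (Suc r). e ! r < l \<and> e ! r \<le> e ! (r - 1)}"
  have "card ?S = (\<Sum>j\<in>{0..l-1}. card {e \<in> ?S. e ! r = j})"
    using finite_I012 assms by (intro card_eq_sum_card_fibers) auto
  also have "\<dots> = (\<Sum>j\<in>{0..l-1}. card {e \<in> I012 r. j \<le> e ! (r - 1)})"
  proof (intro sum.cong refl)
    fix j assume j: "j \<in> {0..l-1}"
    have "{e \<in> ?S. e ! r = j} = {e \<in> I012 (Suc r). e ! r = j \<and> j \<le> e ! (r - 1)}"
      using j assms by auto
    moreover have "{e \<in> I012 r. \<not> completes012 e j \<and> j \<le> (e @ [j]) ! (r - 1)}
        = {e \<in> I012 r. j \<le> e ! (r - 1)}"
      using assms by (auto simp: completes012_def length_I012 nth_append)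
    ultimately show "card {e \<in> ?S. e ! r = j} = card {e \<in> I012 r. j \<le> e ! (r - 1)}"
      using card_I012_Suc_last[of j r "\<lambda>e. j \<le> e ! (r - 1)"] j assms by simp
  qed
  also have "\<dots> = (\<Sum>j\<in>{0..l-1}. \<Sum>i\<in>{j..<r}. card (I012k r i))"
    using card_I012_last_ge[OF assms(1)] by simp
  finally show ?thesis .
qed

lemma card_I012_completes012:
  assumes "k \<le> Suc (Suc r)"
  shows "card {e \<in> I012 (Suc (Suc r)). completes012 e k}
       = (\<Sum>l\<in>{1..k-1}. card {e \<in> I012 (Suc r). e ! r < l \<and> e ! r \<le> e ! (r - 1)})"
proof -
  let ?C = "{e \<in> I012 (Suc (Suc r)). completes012 e k}"
  have "(\<lambda>e. e ! Suc r) ` ?C \<subseteq> {1..k-1}"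
    by (auto simp: completes012_iff length_I012)
  then have "card ?C = (\<Sum>l\<in>{1..k-1}. card {e \<in> ?C. e ! Suc r = l})"
    using finite_I012 by (intro card_eq_sum_card_fibers) auto
  also have "\<dots> = (\<Sum>l\<in>{1..k-1}. card {e \<in> I012 (Suc r). e ! r < l \<and> e ! r \<le> e ! (r - 1)})"
  proof (rule sum.cong[OF refl])
    fix l assume l: "l \<in> {1..k-1}"
    have "{e \<in> ?C. e ! Suc r = l} = {e \<in> I012 (Suc (Suc r)). e ! Suc r = l \<and> e ! r < l}"
      using l by (auto simp: completes012_iff length_I012)
    also have "card \<dots> = card {e \<in> I012 (Suc r). \<not> completes012 e l \<and> (e @ [l]) ! r < l}"
      using l assms by (intro card_I012_Suc_last) auto
    also have "{e \<in> I012 (Suc r). \<not> completes012 e l \<and> (e @ [l]) ! r < l}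
        = {e \<in> I012 (Suc r). e ! r < l \<and> e ! r \<le> e ! (r - 1)}"
    proof (rule Collect_cong)
      fix e
      show "(e \<in> I012 (Suc r) \<and> \<not> completes012 e l \<and> (e @ [l]) ! r < l)
          \<longleftrightarrow> (e \<in> I012 (Suc r) \<and> e ! r < l \<and> e ! r \<le> e ! (r - 1))"
        using length_I012[of e "Suc r"]
        by (cases r) (auto simp: completes012_def nth_append)
    qed
    finally show "card {e \<in> ?C. e ! Suc r = l}
        = card {e \<in> I012 (Suc r). e ! r < l \<and> e ! r \<le> e ! (r - 1)}" .
  qed
  finally show ?thesis .
qed

lemma card_I012k_recurrence:
  assumes "4 \<le> n" "k < n"
  shows "card (I012k n k) + (\<Sum>l\<in>{1..k-1}. \<Sum>j\<in>{0..l-1}. \<Sum>i\<in>{j..<n-3}. card (I012k (n - 3) i))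
       = card (I012 (n - 1))"
proof -
  obtain r where n: "n = Suc (Suc (Suc r))" and r: "1 \<le> r"
  proof
    show "n = Suc (Suc (Suc (n - 3)))" "1 \<le> n - 3"
      using assms(1) by simp_all
  qed
  have "(\<Sum>l\<in>{1..k-1}. \<Sum>j\<in>{0..l-1}. \<Sum>i\<in>{j..<r}. card (I012k r i))
      = (\<Sum>l\<in>{1..k-1}. card {e \<in> I012 (Suc r). e ! r < l \<and> e ! r \<le> e ! (r - 1)})"
  proof (rule sum.cong[OF refl])
    fix l assume l: "l \<in> {1..k-1}"
    then have "1 \<le> l" "l \<le> Suc r"
      using assms(2) n by auto
    then show "(\<Sum>j\<in>{0..l-1}. \<Sum>i\<in>{j..<r}. card (I012k r i))
        = card {e \<in> I012 (Suc r). e ! r < l \<and> e ! r \<le> e ! (r - 1)}"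
      by (rule card_I012_last_below_descent[symmetric, OF r])
  qed
  also have "\<dots> = card {e \<in> I012 (Suc (Suc r)). completes012 e k}"
    using assms(2) n by (intro card_I012_completes012[symmetric]) simp
  finally show ?thesis
    using card_I012k_Suc[of k "Suc (Suc r)"] assms(2) n by simp
qed

lemma sum_of_bool_le_atLeastAtMost:
  assumes "1 \<le> l"
  shows "(\<Sum>j\<in>{0..l-1}. of_bool (j \<le> i) :: real) = real (min l (Suc i))"
proof -
  have "{0..l-1} \<inter> {j. j \<le> i} = {0..min (l - 1) i}"
    by auto
  then show ?thesis
    using assms by simp
qed

lemma sum_sum_of_bool_le:
  "(\<Sum>l\<in>{1..k-1}. \<Sum>j\<in>{0..l-1}. of_bool (j \<le> i) :: real)
   = (if i < k - 2 then (real i + 1) * (real k - 1 - real i / 2) else real k * (real k - 1) / 2)"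
proof (induction k)
  case (Suc k)
  show ?case
  proof (cases "k = 0")
    case False
    have ins: "{1..Suc k - 1} = insert k {1..k-1}"
      using False by auto
    have "(\<Sum>l\<in>{1..Suc k - 1}. \<Sum>j\<in>{0..l-1}. of_bool (j \<le> i) :: real)
        = (\<Sum>j\<in>{0..k-1}. of_bool (j \<le> i)) + (\<Sum>l\<in>{1..k-1}. \<Sum>j\<in>{0..l-1}. of_bool (j \<le> i))"
      unfolding ins by (subst sum.insert) auto
    also have "\<dots> = real (min k (Suc i))
          + (if i < k - 2 then (real i + 1) * (real k - 1 - real i / 2) else real k * (real k - 1) / 2)"
      using False by (simp only: Suc.IH sum_of_bool_le_atLeastAtMost)
    also have "\<dots> = (if i < Suc k - 2 then (real i + 1) * (real (Suc k) - 1 - real i / 2)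
                        else real (Suc k) * (real (Suc k) - 1) / 2)"
    proof -
      consider "i < k - 2" | "i = k - 2" "2 \<le> k" | "k - 1 \<le> i"
        using False by linarith
      then show ?thesis
      proof cases
        case 1
        then have "min k (Suc i) = Suc i" "i < Suc k - 2" by auto
        with 1 show ?thesis by (simp add: field_simps)
      next
        case 2
        then have "min k (Suc i) = Suc i" "i < Suc k - 2" "\<not> i < k - 2" "real k = real i + 2" by auto
        then show ?thesis by (simp add: field_simps)
      next
        case 3
        then have "min k (Suc i) = k" "\<not> i < Suc k - 2" "\<not> i < k - 2" using False by auto
        then show ?thesis by (simp add: field_simps)
      qed
    qed
    finally show ?thesis .
  qed simp
qed simp

lemma nested_sum_tail_eq:
  fixes a :: "nat \<Rightarrow> real"
  assumes "1 \<le> R" "k \<le> R + 2"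
  shows "(\<Sum>l\<in>{1..k-1}. \<Sum>j\<in>{0..l-1}. \<Sum>i\<in>{j..<R}. a i)
       = (\<Sum>i<k-2. (real i + 1) * (real k - 1 - real i / 2) * a i)
         + real k * (real k - 1) / 2 * (\<Sum>i\<in>{k-2..R-1}. a i)"
proof -
  define c where "c i = (\<Sum>l\<in>{1..k-1}. \<Sum>j\<in>{0..l-1}. of_bool (j \<le> i) :: real)" for i
  have tail: "(\<Sum>i\<in>{j..<R}. a i) = (\<Sum>i<R. of_bool (j \<le> i) * a i)" for j
  proof -
    have "{..<R} \<inter> {i. j \<le> i} = {j..<R}"
      by auto
    then show ?thesis
      using sum_of_bool_mult_eq[of "{..<R}" "\<lambda>i. j \<le> i" a] by simp
  qed
  have "(\<Sum>l\<in>{1..k-1}. \<Sum>j\<in>{0..l-1}. \<Sum>i\<in>{j..<R}. a i)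
      = (\<Sum>l\<in>{1..k-1}. \<Sum>i<R. \<Sum>j\<in>{0..l-1}. of_bool (j \<le> i) * a i)"
    unfolding tail by (rule sum.cong[OF refl], rule sum.swap)
  also have "\<dots> = (\<Sum>i<R. c i * a i)"
    unfolding c_def sum_distrib_right by (rule sum.swap)
  also have "\<dots> = (\<Sum>i<k-2. c i * a i) + (\<Sum>i\<in>{k-2..<R}. c i * a i)"
  proof -
    have "{..<R} = {..<k-2} \<union> {k-2..<R}"
      using assms by auto
    then show ?thesis
      by (metis finite_atLeastLessThan finite_lessThan ivl_disj_int_one(2) sum.union_disjoint)
  qed
  also have "\<dots> = (\<Sum>i<k-2. (real i + 1) * (real k - 1 - real i / 2) * a i)
         + real k * (real k - 1) / 2 * (\<Sum>i\<in>{k-2..R-1}. a i)"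
  proof -
    have c: "c i = (if i < k - 2 then (real i + 1) * (real k - 1 - real i / 2) else real k * (real k - 1) / 2)" for i
      unfolding c_def by (rule sum_sum_of_bool_le)
    have "{k-2..<R} = {k-2..R-1}"
      using assms by auto
    then show ?thesis
      by (simp add: c sum_distrib_left)
  qed
  finally show ?thesis .
qed

lemma I012_1: "I012 (Suc 0) = {[0]}"
  by (simp add: I012_Suc I012_0 completes012_def)

lemma I012_2: "I012 (Suc (Suc 0)) = {[0, 0], [0, 1]}"
  by (simp add: I012_Suc[of "Suc 0"] I012_1 completes012_def atMost_Suc)

lemma I012_3: "I012 (Suc (Suc (Suc 0))) = {[0, 0, 0], [0, 0, 1], [0, 0, 2], [0, 1, 0], [0, 1, 1]}"
proof -
  have filter_insert: "{e \<in> insert a A. P e} = (if P a then insert a {e \<in> A. P e} else {e \<in> A. P e})"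
    for a :: "nat list" and A P
    by auto
  show ?thesis
    unfolding I012_Suc[of "Suc (Suc 0)"] I012_2 filter_insert
    by (simp add: completes012_def atMost_Suc insert_commute numeral_2_eq_2)
qed

lemma card_I012k_initial:
  "card (I012k 1 0) = 1 \<and> card (I012k 2 0) = 1 \<and> card (I012k 2 1) = 1
   \<and> card (I012k 3 2) = 1 \<and> card (I012k 3 0) = 2 \<and> card (I012k 3 1) = 2"
proof -
  have "I012k 1 0 = {[0]}" "I012k 2 0 = {[0, 0]}" "I012k 2 1 = {[0, 1]}" "I012k 3 2 = {[0, 0, 2]}"
    "I012k 3 0 = {[0, 0, 0], [0, 1, 0]}" "I012k 3 1 = {[0, 0, 1], [0, 1, 1]}"
    by (auto simp: I012k_def I012_1 I012_2 I012_3 numeral_3_eq_3 numeral_2_eq_2)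
  then show ?thesis
    by simp
qed

theorem mainTheorem14:
  shows "(\<forall>n k. 4 \<le> n \<and> k < n \<longrightarrow>
            int (card (I012k n k)) =
              int (card (I012 (n - 1)))
              - (\<Sum>l\<in>{1..k-1}. \<Sum>j\<in>{0..l-1}. \<Sum>i\<in>{j..<n-3}. int (card (I012k (n - 3) i))))
       \<and> card (I012k 1 0) = 1 \<and> card (I012k 2 0) = 1 \<and> card (I012k 2 1) = 1
       \<and> card (I012k 3 2) = 1 \<and> card (I012k 3 0) = 2 \<and> card (I012k 3 1) = 2
       \<and> (\<forall>n k. 4 \<le> n \<and> k < n \<longrightarrow>
            real (card (I012k n k)) =
              real (card (I012 (n - 1)))
              - (\<Sum>i<k-2. (real i + 1) * (real k - 1 - real i / 2) * real (card (I012k (n - 3) i)))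
              - real k * (real k - 1) / 2 * (\<Sum>i\<in>{k-2..n-4}. real (card (I012k (n - 3) i))))"
proof (intro conjI allI impI)
  fix n k :: nat assume nk: "4 \<le> n \<and> k < n"
  then have recurrence: "card (I012k n k)
      + (\<Sum>l\<in>{1..k-1}. \<Sum>j\<in>{0..l-1}. \<Sum>i\<in>{j..<n-3}. card (I012k (n - 3) i))
      = card (I012 (n - 1))"
    by (intro card_I012k_recurrence) auto
  from arg_cong[OF recurrence, of int]
  show "int (card (I012k n k)) = int (card (I012 (n - 1)))
      - (\<Sum>l\<in>{1..k-1}. \<Sum>j\<in>{0..l-1}. \<Sum>i\<in>{j..<n-3}. int (card (I012k (n - 3) i)))"
    by simp
  from arg_cong[OF recurrence, of real]
  have "real (card (I012k n k)) = real (card (I012 (n - 1)))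
      - (\<Sum>l\<in>{1..k-1}. \<Sum>j\<in>{0..l-1}. \<Sum>i\<in>{j..<n-3}. real (card (I012k (n - 3) i)))"
    by simp
  also have "(\<Sum>l\<in>{1..k-1}. \<Sum>j\<in>{0..l-1}. \<Sum>i\<in>{j..<n-3}. real (card (I012k (n - 3) i)))
      = (\<Sum>i<k-2. (real i + 1) * (real k - 1 - real i / 2) * real (card (I012k (n - 3) i)))
        + real k * (real k - 1) / 2 * (\<Sum>i\<in>{k-2..n-3-1}. real (card (I012k (n - 3) i)))"
    using nk by (intro nested_sum_tail_eq) auto
  also have "n - 3 - 1 = n - 4"
    by simp
  finally show "real (card (I012k n k)) = real (card (I012 (n - 1)))
      - (\<Sum>i<k-2. (real i + 1) * (real k - 1 - real i / 2) * real (card (I012k (n - 3) i)))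
      - real k * (real k - 1) / 2 * (\<Sum>i\<in>{k-2..n-4}. real (card (I012k (n - 3) i)))"
    by simp
qed (use card_I012k_initial in auto)

end
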